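(* Let $X$, $\mathcal{B}$, $\Delta$, $\mathcal{D}(\mathcal{B})$ and $\mu\mapsto\hat\mu$ be as in the context (in particular $\mathcal{B}$ vanishes nowhere on $X$). Let $\mu\in\mathcal{D}(\mathcal{B})$ and $f\in\mathcal{B}$. Then $f=0$ $\mu$-almost everywhere on $X$ if and only if $\hat f=0$ $\hat\mu$-almost everywhere on $\Delta$.
   Context: $X$ is a nonempty set and $\mathcal{B}$ is a real vector space of bounded functions $X\to\mathbb{R}$ closed under pointwise multiplication, pointwise max and min, with $f\wedge1\in\mathcal{B}$ for $f\in\mathcal{B}$. Assume that for every $x\in X$ there is $f\in\mathcal{B}$ with $f(x)\neq0$. $A(\mathcal{B})$ is the supremum-norm closure of $\mathcal{B}+i\mathcal{B}$, a commutative $C^\ast$-algebra; $\Delta$ is its spectrum (nonzero continuous multiplicative linear functionals with the Gelfand topology), locally compact Hausdorff; $\hat a(\varphi)=\varphi(a)$ is the Gelfand transform, an isometric $^\ast$-isomorphism $A(\mathcal{B})\to C_0(\Delta)$; $\hat f\geq0$ iff $f$ is real-valued and $\geq0$. $\sigma(\mathcal{B})$ is the $\sigma$-ring generated by $\mathcal{B}$, and $\mathcal{D}(\mathcal{B})$ is the set of nonnegative measures $\mu$ on $\sigma(\mathcal{B})$ such that every $f\in\mathcal{B}$ is $\mu$-integrable. For $\mu\in\mathcal{D}(\mathcal{B})$: set $I(f)=\int_Xf\,d\mu$ for $f\in\mathcal{B}$; for nonnegative real-valued $f\in A(\mathcal{B})$ set $I(f)=\sup_nI(f_n)$ for any increasing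 sequence $(f_n)$ of nonnegative functions in $\mathcal{B}$ converging pointwise to $f$; set $\hat I(\hat f):=I(f)$ for nonnegative $\hat f\in C_0(\Delta)$; $\hat\mu$ is the unique nonnegative Radon measure on $\Delta$ with $\int_\Delta\hat g\,d\hat\mu=\hat I(\hat g)$ for all nonnegative $\hat g\in C_c(\Delta)$. *)

theory Defs
  imports "HOL-Analysis.Analysis"
begin

definition admissible_B :: "('x \<Rightarrow> real) set \<Rightarrow> bool" where
  "admissible_B B \<longleftrightarrow>
     (\<lambda>x. 0) \<in> B
   \<and> (\<forall>f\<in>B. \<forall>g\<in>B. (\<lambda>x. f x + g x) \<in> B)
   \<and> (\<forall>f\<in>B. \<forall>c::real. (\<lambda>x. c * f x) \<in> B)
   \<and> (\<forall>f\<in>B. \<exists>C. \<forall>x. \<bar>f x\<bar> \<le> C)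
   \<and> (\<forall>f\<in>B. \<forall>g\<in>B. (\<lambda>x. f x * g x) \<in> B)
   \<and> (\<forall>f\<in>B. \<forall>g\<in>B. (\<lambda>x. max (f x) (g x)) \<in> B)
   \<and> (\<forall>f\<in>B. \<forall>g\<in>B. (\<lambda>x. min (f x) (g x)) \<in> B)
   \<and> (\<forall>f\<in>B. (\<lambda>x. min (f x) 1) \<in> B)"

definition vanishes_nowhere :: "('x \<Rightarrow> real) set \<Rightarrow> bool" where
  "vanishes_nowhere B \<longleftrightarrow> (\<forall>x. \<exists>f\<in>B. f x \<noteq> 0)"

definition algA :: "('x \<Rightarrow> real) set \<Rightarrow> ('x \<Rightarrow> complex) set" where
  "algA B = {a. \<forall>e>0. \<exists>f\<in>B. \<exists>g\<in>B.
                  \<forall>x. cmod (a x - (complex_of_real (f x) + \<i> * complex_of_real (g x))) \<le> e}"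

text \<open>Spectrum: nonzero continuous multiplicative linear functionals on A(B),
  represented as functions on A(B) which are undefined outside A(B).\<close>
definition spectrum_A :: "('x \<Rightarrow> real) set \<Rightarrow> (('x \<Rightarrow> complex) \<Rightarrow> complex) set" where
  "spectrum_A B = {\<phi>.
      (\<forall>a. a \<notin> algA B \<longrightarrow> \<phi> a = undefined)
    \<and> (\<forall>a\<in>algA B. \<forall>b\<in>algA B. \<phi> (\<lambda>x. a x + b x) = \<phi> a + \<phi> b)
    \<and> (\<forall>a\<in>algA B. \<forall>c::complex. \<phi> (\<lambda>x. c * a x) = c * \<phi> a)
    \<and> (\<forall>a\<in>algA B. \<forall>b\<in>algA B. \<phi> (\<lambda>x. a x * b x) = \<phi> a * \<phi> b)
    \<and> (\<exists>C. \<forall>a\<in>algA B. cmod (\<phi> a) \<le> C * (SUP x. cmod (a x)))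
    \<and> (\<exists>a\<in>algA B. \<phi> a \<noteq> 0)}"

text \<open>Gelfand topology: the weak-star topology, i.e. the topology induced from the
  product topology of pointwise convergence on A(B).\<close>
definition gelfand_top :: "('x \<Rightarrow> real) set \<Rightarrow> (('x \<Rightarrow> complex) \<Rightarrow> complex) topology" where
  "gelfand_top B = subtopology (product_topology (\<lambda>_. euclidean) (algA B)) (spectrum_A B)"

definition gelfand_hat :: "('x \<Rightarrow> complex) \<Rightarrow> (('x \<Rightarrow> complex) \<Rightarrow> complex) \<Rightarrow> complex" where
  "gelfand_hat a = (\<lambda>\<phi>. \<phi> a)"

definition borel_of_top :: "'a topology \<Rightarrow> 'a measure" where
  "borel_of_top T = sigma (topspace T) {U. openin T U}"

definition radon_measure :: "'a topology \<Rightarrow> 'a measure \<Rightarrow> bool" where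
  "radon_measure T \<nu> \<longleftrightarrow>
     sets \<nu> = sets (borel_of_top T) \<and> space \<nu> = topspace T
   \<and> (\<forall>K. compactin T K \<longrightarrow> emeasure \<nu> K < \<infinity>)
   \<and> (\<forall>E\<in>sets \<nu>. emeasure \<nu> E = (INF U\<in>{U. openin T U \<and> E \<subseteq> U}. emeasure \<nu> U))
   \<and> (\<forall>U. openin T U \<longrightarrow> emeasure \<nu> U = (SUP K\<in>{K. compactin T K \<and> K \<subseteq> U}. emeasure \<nu> K))"

text \<open>sigma(B): generated by the sets f^{-1}(E), E Borel with 0 not in E. Measures on the
  sigma-ring sigma(B) are represented by measures on the sigma-algebra it generates on X.\<close>
definition sigmaB_sets :: "('x \<Rightarrow> real) set \<Rightarrow> 'x set set" where
  "sigmaB_sets B = sigma_sets UNIV {f -` E | f E. f \<in> B \<and> E \<in> sets borel \<and> (0::real) \<notin> E}"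

definition D_B :: "('x \<Rightarrow> real) set \<Rightarrow> 'x measure set" where
  "D_B B = {\<mu>. space \<mu> = UNIV \<and> sets \<mu> = sigmaB_sets B \<and> (\<forall>f\<in>B. integrable \<mu> f)}"

definition I_ext :: "('x \<Rightarrow> real) set \<Rightarrow> 'x measure \<Rightarrow> ('x \<Rightarrow> real) \<Rightarrow> ennreal" where
  "I_ext B \<mu> f = (SOME r. \<exists>fs. (\<forall>n. fs n \<in> B \<and> (\<forall>x. 0 \<le> fs n x)) \<and> incseq fs
        \<and> (\<forall>x. (\<lambda>n. fs n x) \<longlonglongrightarrow> f x)
        \<and> r = (SUP n. \<integral>\<^sup>+ x. ennreal (fs n x) \<partial>\<mu>))"

text \<open>mu-hat: the Radon measure on Delta representing I-hat on nonnegative C_c(Delta).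
  (Every element of C_0(Delta) is the Gelfand transform of a unique element of A(B).)\<close>
definition represents_hat :: "('x \<Rightarrow> real) set \<Rightarrow> 'x measure \<Rightarrow> (('x \<Rightarrow> complex) \<Rightarrow> complex) measure \<Rightarrow> bool" where
  "represents_hat B \<mu> \<nu> \<longleftrightarrow>
     radon_measure (gelfand_top B) \<nu>
   \<and> (\<forall>f\<in>algA B.
        (\<forall>\<phi>\<in>spectrum_A B. gelfand_hat f \<phi> \<in> \<real> \<and> 0 \<le> Re (gelfand_hat f \<phi>))
      \<and> compactin (gelfand_top B)
          (gelfand_top B closure_of {\<phi>\<in>spectrum_A B. gelfand_hat f \<phi> \<noteq> 0})
      \<longrightarrow> (\<integral>\<^sup>+ \<phi>. ennreal (Re (gelfand_hat f \<phi>)) \<partial>\<nu>) = I_ext B \<mu> (\<lambda>x. Re (f x)))"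

end

theory Submission
  imports Defs
begin

text \<open>Put \<open>k = f \<cdot> f\<close> and, for \<open>t > 0\<close>, split \<open>k\<close> into \<open>min k t\<close> and the excess
  \<open>r = k - min k t\<close>. Since \<open>min k t \<cdot> r = t \<cdot> r\<close>, every character either annihilates \<open>r\<close>
  or sends \<open>min k t\<close> to \<open>t\<close>; the characters of the second kind form a compact set
  (Banach--Alaoglu), so the Gelfand transform of \<open>r\<close> has compact support and the defining
  property of \<open>\<mu>\<close>-hat equates its integral with the \<open>\<mu>\<close>-integral of \<open>r\<close>. Characters are
  positive on nonnegative elements of \<open>B\<close>, so both integrands are nonnegative, and \<open>r\<close>
  vanishes \<open>\<mu>\<close>-a.e. iff its transform vanishes \<open>\<mu>\<close>-hat-a.e. Finally \<open>k = 0\<close> iff all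
  excesses vanish, and likewise \<open>\<phi> k = 0\<close> iff \<open>\<phi>\<close> annihilates all excesses, because then
  \<open>\<phi> k = \<phi> (min k t)\<close> has modulus at most \<open>t\<close>.\<close>

section \<open>Facts from real analysis and topology\<close>

lemma le_if_power_le_const_mult_power:
  fixes z c K :: real
  assumes "0 \<le> z" "0 \<le> c" and pow: "\<And>n. z ^ Suc n \<le> K * c ^ Suc n"
  shows "z \<le> c"
proof (rule ccontr)
  assume "\<not> z \<le> c"
  then have "c < z" by simp
  show False
  proof (cases "c = 0")
    case True
    then show False using pow[of 0] \<open>c < z\<close> by simp
  next
    case False
    with \<open>0 \<le> c\<close> have "0 < c" by simp
    have r: "1 < z / c" using \<open>c < z\<close> \<open>0 < c\<close> by simp
    obtain n where n: "K < (z / c) ^ n" using real_arch_pow[OF r] by blast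
    have "z ^ Suc n = (z / c) ^ Suc n * c ^ Suc n"
      using \<open>0 < c\<close> by (simp add: power_divide)
    then have "(z / c) ^ Suc n * c ^ Suc n \<le> K * c ^ Suc n" using pow[of n] by simp
    then have "(z / c) ^ Suc n \<le> K"
      using \<open>0 < c\<close> by (simp only: mult_le_cancel_right_pos zero_less_power)
    moreover have "(z / c) ^ n \<le> (z / c) ^ Suc n" using r by (intro power_increasing) auto
    ultimately show False using n by simp
  qed
qed

text \<open>The point \<open>z\<close> keeps a positive distance from the ray \<open>[0,\<infinity>)\<close>, so a path moving at
  most at unit speed cannot jump from the ray to \<open>z\<close>.\<close>

lemma eq_of_real_if_dichotomy_lipschitz:
  fixes V :: "real \<Rightarrow> complex"
  assumes dichotomy: "\<And>t. t > 0 \<Longrightarrow> V t = of_real t \<or> V t = z"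
    and small: "\<And>t. t > 0 \<Longrightarrow> cmod (V t) \<le> t"
    and lipschitz: "\<And>s t. s > 0 \<Longrightarrow> t > 0 \<Longrightarrow> cmod (V t - V s) \<le> \<bar>t - s\<bar>"
    and off_ray: "\<And>s. s \<ge> 0 \<Longrightarrow> z \<noteq> of_real s"
    and "t > 0"
  shows "V t = of_real t"
proof -
  obtain d where "d > 0" and d: "\<And>s. s \<ge> 0 \<Longrightarrow> d \<le> cmod (z - of_real s)"
  proof (cases "Im z = 0")
    case False
    show ?thesis
    proof (rule that[of "\<bar>Im z\<bar>"])
      show "\<bar>Im z\<bar> > 0" using False by simp
      show "\<bar>Im z\<bar> \<le> cmod (z - of_real s)" for s using abs_Im_le_cmod[of "z - of_real s"] by simp
    qed
  next
    case True
    then have "Re z < 0" using off_ray[of "Re z"] by (force simp: complex_eq_iff)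
    show ?thesis
    proof (rule that[of "- Re z"])
      show "- Re z > 0" using \<open>Re z < 0\<close> by simp
      show "- Re z \<le> cmod (z - of_real s)" if "s \<ge> 0" for s
        using abs_Re_le_cmod[of "z - of_real s"] that by simp
    qed
  qed
  obtain n where "t / d < real n" using reals_Archimedean2 by blast
  then have "t < d * real (Suc n)" using \<open>d > 0\<close> by (simp add: divide_less_eq algebra_simps)
  define h where "h = t / real (Suc n)"
  have "0 < h" using \<open>t > 0\<close> by (simp add: h_def)
  have "h < d" using \<open>t < d * real (Suc n)\<close> by (simp add: h_def divide_less_eq)
  have "t = real (Suc n) * h" by (simp add: h_def)
  have "V (real (Suc m) * h) = of_real (real (Suc m) * h)" for m
  proof (induction m)
    case 0
    have "V h \<noteq> z"
      using small[OF \<open>0 < h\<close>] d[of 0] \<open>h < d\<close> by auto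
    then show ?case using dichotomy[OF \<open>0 < h\<close>] by simp
  next
    case (Suc m)
    define s where "s = real (Suc m) * h"
    have "0 < s" using \<open>0 < h\<close> by (simp add: s_def)
    have "V (s + h) \<noteq> z"
    proof
      assume "V (s + h) = z"
      moreover have "V s = of_real s" using Suc by (simp only: s_def)
      ultimately have "cmod (z - of_real s) \<le> h"
        using lipschitz[of s "s + h"] \<open>0 < s\<close> \<open>0 < h\<close> by simp
      then show False using d[of s] \<open>0 < s\<close> \<open>h < d\<close> by simp
    qed
    moreover have "real (Suc (Suc m)) * h = s + h" by (simp add: s_def algebra_simps)
    ultimately show ?case using dichotomy[of "s + h"] \<open>0 < s\<close> \<open>0 < h\<close> by auto
  qed
  then show ?thesis using \<open>t = real (Suc n) * h\<close> by simp
qed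

lemma eq_0_if_le_inverse_Suc:
  fixes y :: real
  assumes "0 \<le> y" and "\<And>n. y \<le> 1 / real (Suc n)"
  shows "y = 0"
proof (rule ccontr)
  assume "y \<noteq> 0"
  with \<open>0 \<le> y\<close> have "0 < y" by simp
  then obtain n where "1 / real (Suc n) < y" by (rule nat_approx_posE)
  with assms(2)[of n] show False by simp
qed

lemma ennreal_Re_eq_0_iff:
  assumes "z \<in> \<real>" and "0 \<le> Re z"
  shows "ennreal (Re z) = 0 \<longleftrightarrow> z = 0"
proof -
  have "ennreal (Re z) = 0 \<longleftrightarrow> Re z = 0" using assms(2) by (simp add: ennreal_eq_0_iff)
  also have "\<dots> \<longleftrightarrow> z = 0" using assms(1) by (simp add: complex_eq_iff complex_is_Real_iff)
  finally show ?thesis .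
qed

lemma borel_measurable_continuous_map_radon:
  fixes F :: "'a \<Rightarrow> 'b::topological_space"
  assumes radon: "radon_measure T \<nu>" and F: "continuous_map T euclidean F"
  shows "F \<in> borel_measurable \<nu>"
proof (rule borel_measurableI)
  fix S :: "'b set" assume "open S"
  have space: "space \<nu> = topspace T" and sets: "sets \<nu> = sets (borel_of_top T)"
    using radon by (auto simp: radon_measure_def)
  have "openin euclidean S" using \<open>open S\<close> by (simp only: open_openin)
  then have "openin T {x \<in> topspace T. F x \<in> S}" by (rule openin_continuous_map_preimage[OF F])
  moreover have "sets (borel_of_top T) = sigma_sets (topspace T) {U. openin T U}"
    unfolding borel_of_top_def by (rule sets_measure_of) (auto dest: openin_subset)
  ultimately have "{x \<in> topspace T. F x \<in> S} \<in> sets \<nu>" using sets by (simp add: sigma_sets.Basic)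
  moreover have "F -` S \<inter> space \<nu> = {x \<in> topspace T. F x \<in> S}" using space by auto
  ultimately show "F -` S \<inter> space \<nu> \<in> sets \<nu>" by simp
qed

lemma continuous_map_mult:
  fixes f g :: "'a \<Rightarrow> 'b::real_normed_algebra"
  shows "continuous_map X euclidean f \<Longrightarrow> continuous_map X euclidean g
    \<Longrightarrow> continuous_map X euclidean (\<lambda>x. f x * g x)"
  by (simp add: continuous_map_atin tendsto_mult)

lemma closedin_continuous_map_preimages:
  assumes "\<And>i. i \<in> I \<Longrightarrow> continuous_map X euclidean (F i)" and "\<And>i. i \<in> I \<Longrightarrow> closed (C i)"
  shows "closedin X {x \<in> topspace X. \<forall>i\<in>I. F i x \<in> C i}"
proof (cases "I = {}")
  case False
  then have "{x \<in> topspace X. \<forall>i\<in>I. F i x \<in> C i} = (\<Inter>i\<in>I. {x \<in> topspace X. F i x \<in> C i})"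
    by auto
  also have "closedin X \<dots>"
    using False assms
    by (intro closedin_INT closedin_continuous_map_preimage) (auto simp flip: closed_closedin)
  finally show ?thesis .
qed simp

lemma continuous_map_evaluation:
  "continuous_map (product_topology (\<lambda>_. euclidean) A) euclidean (\<lambda>\<psi>. \<psi> b)"
proof (cases "b \<in> A")
  case True
  then show ?thesis by (rule continuous_map_product_projection)
next
  case False
  show ?thesis
  proof (rule continuous_map_eq[OF continuous_map_canonical_const])
    fix \<psi> assume "\<psi> \<in> topspace (product_topology (\<lambda>_. euclidean) A)"
    then have "\<psi> \<in> PiE A (\<lambda>_. UNIV)" by simp
    then have "\<psi> b = undefined" using False by (rule PiE_arb)
    then show "undefined = \<psi> b" by (rule sym)
  qed
qed

section \<open>The algebra \<open>A(B)\<close> and its spectrum\<close>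

abbreviation of_real_fun :: "('x \<Rightarrow> real) \<Rightarrow> 'x \<Rightarrow> complex" where
  "of_real_fun f \<equiv> \<lambda>x. complex_of_real (f x)"

definition sup_norm :: "('x \<Rightarrow> complex) \<Rightarrow> real" where
  "sup_norm a = (SUP x. cmod (a x))"

definition excess :: "('x \<Rightarrow> real) \<Rightarrow> real \<Rightarrow> 'x \<Rightarrow> real" where
  "excess k t = (\<lambda>x. k x - min (k x) t)"

lemma algA_approx:
  assumes "a \<in> algA B" "e > 0"
  obtains f g where "f \<in> B" "g \<in> B"
    "\<And>x. cmod (a x - (complex_of_real (f x) + \<i> * complex_of_real (g x))) \<le> e"
  using assms unfolding algA_def by blast

lemma spectrum_A_add:
  "\<phi> \<in> spectrum_A B \<Longrightarrow> a \<in> algA B \<Longrightarrow> b \<in> algA B \<Longrightarrow> \<phi> (\<lambda>x. a x + b x) = \<phi> a + \<phi> b"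
  by (simp add: spectrum_A_def)

lemma spectrum_A_scale:
  "\<phi> \<in> spectrum_A B \<Longrightarrow> a \<in> algA B \<Longrightarrow> \<phi> (\<lambda>x. c * a x) = c * \<phi> a"
  by (simp add: spectrum_A_def)

lemma spectrum_A_mult:
  "\<phi> \<in> spectrum_A B \<Longrightarrow> a \<in> algA B \<Longrightarrow> b \<in> algA B \<Longrightarrow> \<phi> (\<lambda>x. a x * b x) = \<phi> a * \<phi> b"
  by (simp add: spectrum_A_def)

lemma spectrum_A_bounded:
  "\<phi> \<in> spectrum_A B \<Longrightarrow> \<exists>C. \<forall>a\<in>algA B. cmod (\<phi> a) \<le> C * sup_norm a"
  by (simp add: spectrum_A_def sup_norm_def)

lemma spectrum_A_undefined: "\<phi> \<in> spectrum_A B \<Longrightarrow> a \<notin> algA B \<Longrightarrow> \<phi> a = undefined"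
  by (simp add: spectrum_A_def)

lemma topspace_gelfand_top: "topspace (gelfand_top B) = spectrum_A B"
proof -
  have "spectrum_A B \<subseteq> topspace (product_topology (\<lambda>_. euclidean) (algA B))"
    using spectrum_A_undefined by (auto simp: PiE_iff)
  then show ?thesis unfolding gelfand_top_def topspace_subtopology by blast
qed

lemma continuous_map_gelfand_hat: "continuous_map (gelfand_top B) euclidean (gelfand_hat a)"
  unfolding gelfand_top_def gelfand_hat_def
  by (intro continuous_map_from_subtopology continuous_map_evaluation)

lemma Hausdorff_space_gelfand_top: "Hausdorff_space (gelfand_top B)"
  unfolding gelfand_top_def
  by (intro Hausdorff_space_subtopology) (simp add: Hausdorff_space_product_topology)

lemma space_eq_spectrum_A_if_represents_hat: "represents_hat B \<mu> \<nu> \<Longrightarrow> space \<nu> = spectrum_A B"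
  unfolding represents_hat_def radon_measure_def topspace_gelfand_top by blast

text \<open>\<open>I_ext\<close> is defined through an arbitrary approximating sequence (via \<open>SOME\<close>); by monotone
  convergence all such sequences give the same value, so on \<open>B\<close> itself it is the integral.\<close>

lemma I_ext_eq_nn_integral:
  assumes \<mu>: "\<mu> \<in> D_B B" and g: "g \<in> B" and g_nonneg: "\<And>x. 0 \<le> g x"
  shows "I_ext B \<mu> g = (\<integral>\<^sup>+ x. ennreal (g x) \<partial>\<mu>)"
  unfolding I_ext_def
proof (rule some_equality)
  show "\<exists>fs. (\<forall>n. fs n \<in> B \<and> (\<forall>x. 0 \<le> fs n x)) \<and> incseq fs \<and> (\<forall>x. (\<lambda>n. fs n x) \<longlonglongrightarrow> g x)
      \<and> (\<integral>\<^sup>+ x. ennreal (g x) \<partial>\<mu>) = (SUP n. \<integral>\<^sup>+ x. ennreal (fs n x) \<partial>\<mu>)"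
    using g g_nonneg by (intro exI[of _ "\<lambda>n. g"]) (auto simp: incseq_def)
next
  fix r assume "\<exists>fs. (\<forall>n. fs n \<in> B \<and> (\<forall>x. 0 \<le> fs n x)) \<and> incseq fs \<and> (\<forall>x. (\<lambda>n. fs n x) \<longlonglongrightarrow> g x)
      \<and> r = (SUP n. \<integral>\<^sup>+ x. ennreal (fs n x) \<partial>\<mu>)"
  then obtain fs where fs: "\<And>n. fs n \<in> B" and "incseq fs" and lim: "\<And>x. (\<lambda>n. fs n x) \<longlonglongrightarrow> g x"
    and r: "r = (SUP n. \<integral>\<^sup>+ x. ennreal (fs n x) \<partial>\<mu>)" by blast
  define F where "F n x = ennreal (fs n x)" for n x
  have "incseq F"
    using \<open>incseq fs\<close> unfolding F_def incseq_def le_fun_def by (auto intro: ennreal_leI)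
  have "F n \<in> borel_measurable \<mu>" for n
    using \<mu> fs[of n] unfolding F_def D_B_def by (auto intro: borel_measurable_integrable)
  have "(SUP n. F n x) = ennreal (g x)" for x
  proof (rule LIMSEQ_unique)
    show "(\<lambda>n. F n x) \<longlonglongrightarrow> (SUP n. F n x)"
      using \<open>incseq F\<close> by (intro LIMSEQ_SUP) (auto simp: incseq_def le_fun_def)
    show "(\<lambda>n. F n x) \<longlonglongrightarrow> ennreal (g x)" unfolding F_def by (rule tendsto_ennrealI[OF lim])
  qed
  moreover have "(\<integral>\<^sup>+ x. (SUP n. F n x) \<partial>\<mu>) = (SUP n. integral\<^sup>N \<mu> (F n))"
    by (rule nn_integral_monotone_convergence_SUP) fact+
  ultimately show "r = (\<integral>\<^sup>+ x. ennreal (g x) \<partial>\<mu>)" using r unfolding F_def by simp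
qed

section \<open>Characters of an admissible algebra\<close>

locale admissible_algebra =
  fixes B :: "('x \<Rightarrow> real) set"
  assumes admissible: "admissible_B B"
begin

lemma zero_mem: "(\<lambda>x. 0) \<in> B"
  using admissible by (simp add: admissible_B_def)

lemma add_mem: "f \<in> B \<Longrightarrow> g \<in> B \<Longrightarrow> (\<lambda>x. f x + g x) \<in> B"
  using admissible by (simp add: admissible_B_def)

lemma scale_mem: "f \<in> B \<Longrightarrow> (\<lambda>x. c * f x) \<in> B"
  using admissible by (simp add: admissible_B_def)

lemma bounded: "f \<in> B \<Longrightarrow> \<exists>C. \<forall>x. \<bar>f x\<bar> \<le> C"
  using admissible by (simp add: admissible_B_def)

lemma mult_mem: "f \<in> B \<Longrightarrow> g \<in> B \<Longrightarrow> (\<lambda>x. f x * g x) \<in> B"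
  using admissible by (simp add: admissible_B_def)

lemma min_one_mem: "f \<in> B \<Longrightarrow> (\<lambda>x. min (f x) 1) \<in> B"
  using admissible by (simp add: admissible_B_def)

lemma diff_mem: "f \<in> B \<Longrightarrow> g \<in> B \<Longrightarrow> (\<lambda>x. f x - g x) \<in> B"
  using add_mem[OF _ scale_mem[of g "-1"]] by simp

lemma min_const_mem:
  assumes "f \<in> B" "t > 0"
  shows "(\<lambda>x. min (f x) t) \<in> B"
proof -
  have "min (f x) t = t * min (f x / t) 1" for x
    using \<open>t > 0\<close> by (simp add: min_def field_simps)
  then show ?thesis
    using scale_mem[OF min_one_mem[OF scale_mem[OF \<open>f \<in> B\<close>, of "1 / t"]], of t] by simp
qed

lemma excess_mem: "f \<in> B \<Longrightarrow> t > 0 \<Longrightarrow> excess f t \<in> B"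
  unfolding excess_def by (intro diff_mem min_const_mem)

lemma of_real_fun_mem_algA: "f \<in> B \<Longrightarrow> of_real_fun f \<in> algA B"
  unfolding algA_def using zero_mem by force

lemma algA_bounded:
  assumes "a \<in> algA B"
  obtains M where "\<And>x. cmod (a x) \<le> M"
proof -
  obtain f g where fg: "f \<in> B" "g \<in> B"
    and approx: "\<And>x. cmod (a x - (complex_of_real (f x) + \<i> * complex_of_real (g x))) \<le> 1"
    using algA_approx[OF assms zero_less_one] by blast
  obtain Cf Cg where Cf: "\<And>x. \<bar>f x\<bar> \<le> Cf" and Cg: "\<And>x. \<bar>g x\<bar> \<le> Cg"
    using bounded[OF fg(1)] bounded[OF fg(2)] by blast
  have "cmod (a x) \<le> 1 + Cf + Cg" for x
  proof -
    let ?p = "complex_of_real (f x) + \<i> * complex_of_real (g x)"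
    have "cmod ?p \<le> \<bar>f x\<bar> + \<bar>g x\<bar>"
      using norm_triangle_ineq[of "complex_of_real (f x)" "\<i> * complex_of_real (g x)"]
      by (simp add: norm_mult)
    moreover have "cmod (a x) \<le> cmod (a x - ?p) + cmod ?p"
      using norm_triangle_ineq[of "a x - ?p" ?p] by simp
    ultimately show ?thesis using approx[of x] Cf[of x] Cg[of x] by linarith
  qed
  then show ?thesis using that by blast
qed

lemma norm_le_sup_norm: "a \<in> algA B \<Longrightarrow> cmod (a x) \<le> sup_norm a"
proof -
  assume "a \<in> algA B"
  then obtain M where "\<And>x. cmod (a x) \<le> M" using algA_bounded by blast
  then have "bdd_above (range (\<lambda>x. cmod (a x)))" by (intro bdd_aboveI2)
  then show ?thesis unfolding sup_norm_def by (rule cSUP_upper[OF UNIV_I])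
qed

lemma algA_mult:
  assumes a: "a \<in> algA B" and b: "b \<in> algA B"
  shows "(\<lambda>x. a x * b x) \<in> algA B"
  unfolding algA_def
proof (intro CollectI allI impI)
  fix e :: real assume "e > 0"
  obtain Ma Mb where Ma: "\<And>x. cmod (a x) \<le> Ma" and Mb: "\<And>x. cmod (b x) \<le> Mb"
    using algA_bounded[OF a] algA_bounded[OF b] by metis
  have "0 \<le> Ma" "0 \<le> Mb" using Ma Mb norm_ge_zero order_trans by blast+
  define d where "d = min 1 (e / (Ma + Mb + 1))"
  have d: "0 < d" "d \<le> 1" "d * (Ma + Mb + 1) \<le> e"
    using \<open>e > 0\<close> \<open>0 \<le> Ma\<close> \<open>0 \<le> Mb\<close> by (auto simp: d_def pos_le_divide_eq min_def)
  obtain f1 g1 where fg1: "f1 \<in> B" "g1 \<in> B"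
    and ap: "\<And>x. cmod (a x - (complex_of_real (f1 x) + \<i> * complex_of_real (g1 x))) \<le> d"
    using algA_approx[OF a d(1)] by blast
  obtain f2 g2 where fg2: "f2 \<in> B" "g2 \<in> B"
    and bq: "\<And>x. cmod (b x - (complex_of_real (f2 x) + \<i> * complex_of_real (g2 x))) \<le> d"
    using algA_approx[OF b d(1)] by blast
  define F where "F = (\<lambda>x. f1 x * f2 x - g1 x * g2 x)"
  define G where "G = (\<lambda>x. f1 x * g2 x + g1 x * f2 x)"
  have "F \<in> B" "G \<in> B"
    unfolding F_def G_def by (intro add_mem diff_mem mult_mem fg1 fg2)+
  moreover have "cmod (a x * b x - (complex_of_real (F x) + \<i> * complex_of_real (G x))) \<le> e" for x
  proof -
    define p where "p = complex_of_real (f1 x) + \<i> * complex_of_real (g1 x)"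
    define q where "q = complex_of_real (f2 x) + \<i> * complex_of_real (g2 x)"
    have pq: "complex_of_real (F x) + \<i> * complex_of_real (G x) = p * q"
      unfolding p_def q_def F_def G_def by (simp add: algebra_simps complex_eq_iff)
    have "cmod q \<le> cmod (b x) + cmod (b x - q)"
      using norm_triangle_ineq[of "b x" "q - b x"] norm_minus_commute[of q "b x"] by simp
    then have q_bound: "cmod q \<le> Mb + 1" using Mb[of x] bq[of x] d by (simp add: q_def)
    have "a x * b x - p * q = a x * (b x - q) + (a x - p) * q" by (simp add: algebra_simps)
    then have "cmod (a x * b x - p * q) \<le> cmod (a x) * cmod (b x - q) + cmod (a x - p) * cmod q"
      using norm_triangle_ineq[of "a x * (b x - q)" "(a x - p) * q"] by (simp add: norm_mult)
    also have "\<dots> \<le> Ma * d + d * (Mb + 1)"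
      by (intro add_mono mult_mono) (use Ma ap bq q_bound \<open>0 \<le> Ma\<close> d in \<open>auto simp: p_def q_def\<close>)
    also have "\<dots> \<le> e" using d by (simp add: algebra_simps)
    finally show ?thesis using pq by simp
  qed
  ultimately show "\<exists>f\<in>B. \<exists>g\<in>B. \<forall>x. cmod (a x * b x - (complex_of_real (f x) + \<i> * complex_of_real (g x))) \<le> e"
    by blast
qed

text \<open>Applying the continuity bound of \<open>\<phi>\<close> to the powers of \<open>a\<close> and taking roots removes
  its constant.\<close>

lemma norm_spectrum_le:
  assumes \<phi>: "\<phi> \<in> spectrum_A B" and a: "a \<in> algA B" and c: "\<And>x. cmod (a x) \<le> c"
  shows "cmod (\<phi> a) \<le> c"
proof -
  obtain C where C: "\<And>b. b \<in> algA B \<Longrightarrow> cmod (\<phi> b) \<le> C * sup_norm b"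
    using spectrum_A_bounded[OF \<phi>] by blast
  have "0 \<le> c" using c[of undefined] norm_ge_zero order_trans by blast
  define p where "p n = (\<lambda>x. a x ^ Suc n)" for n
  have p_Suc: "p (Suc n) = (\<lambda>x. a x * p n x)" for n by (simp add: p_def)
  have p_mem: "p n \<in> algA B" for n
  proof (induction n)
    case 0
    then show ?case using a by (simp add: p_def)
  next
    case (Suc n)
    then show ?case unfolding p_Suc by (rule algA_mult[OF a])
  qed
  have \<phi>_p: "\<phi> (p n) = \<phi> a ^ Suc n" for n
  proof (induction n)
    case 0
    then show ?case by (simp add: p_def)
  next
    case (Suc n)
    then show ?case unfolding p_Suc spectrum_A_mult[OF \<phi> a p_mem] by simp
  qed
  have "cmod (\<phi> a) ^ Suc n \<le> max C 0 * c ^ Suc n" for n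
  proof -
    have "cmod (p n x) \<le> c ^ Suc n" for x
      unfolding p_def norm_power by (intro power_mono c norm_ge_zero)
    then have sup: "sup_norm (p n) \<le> c ^ Suc n"
      unfolding sup_norm_def by (intro cSUP_least) auto
    have "0 \<le> sup_norm (p n)"
      using norm_le_sup_norm[OF p_mem] norm_ge_zero order_trans by blast
    have "cmod (\<phi> a) ^ Suc n = cmod (\<phi> (p n))" by (simp only: \<phi>_p norm_power)
    also have "\<dots> \<le> C * sup_norm (p n)" by (rule C[OF p_mem])
    also have "\<dots> \<le> max C 0 * sup_norm (p n)"
      using \<open>0 \<le> sup_norm (p n)\<close> by (intro mult_right_mono) auto
    also have "\<dots> \<le> max C 0 * c ^ Suc n"
      using sup by (intro mult_left_mono) auto
    finally show ?thesis .
  qed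
  then show ?thesis using le_if_power_le_const_mult_power[OF norm_ge_zero \<open>0 \<le> c\<close>] by blast
qed

lemma spectrum_truncation:
  assumes \<phi>: "\<phi> \<in> spectrum_A B" and k: "k \<in> B" and t: "t > 0"
  shows "\<phi> (of_real_fun k) = \<phi> (of_real_fun (\<lambda>x. min (k x) t)) + \<phi> (of_real_fun (excess k t))"
    and "(\<phi> (of_real_fun (\<lambda>x. min (k x) t)) - of_real t) * \<phi> (of_real_fun (excess k t)) = 0"
proof -
  let ?v = "of_real_fun (\<lambda>x. min (k x) t)" and ?r = "of_real_fun (excess k t)"
  have v: "?v \<in> algA B" by (intro of_real_fun_mem_algA min_const_mem k t)
  have r: "?r \<in> algA B" by (intro of_real_fun_mem_algA excess_mem k t)
  have "of_real_fun k = (\<lambda>x. ?v x + ?r x)" by (simp add: excess_def)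
  then show "\<phi> (of_real_fun k) = \<phi> ?v + \<phi> ?r" using spectrum_A_add[OF \<phi> v r] by simp
  have prod: "(\<lambda>x. ?v x * ?r x) = (\<lambda>x. of_real t * ?r x)"
    by (auto simp: fun_eq_iff excess_def min_def)
  have "\<phi> ?v * \<phi> ?r = \<phi> (\<lambda>x. ?v x * ?r x)" by (rule spectrum_A_mult[OF \<phi> v r, symmetric])
  also have "\<dots> = of_real t * \<phi> ?r" unfolding prod by (rule spectrum_A_scale[OF \<phi> r])
  finally show "(\<phi> ?v - of_real t) * \<phi> ?r = 0" by (simp add: algebra_simps)
qed

text \<open>By \<open>spectrum_truncation\<close>, \<open>t \<mapsto> \<phi> (min k t)\<close> is a path as in
  \<open>eq_of_real_if_dichotomy_lipschitz\<close> with \<open>z = \<phi> k\<close>, and it reaches \<open>\<phi> k\<close> once \<open>t\<close> exceeds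
  the supremum of \<open>k\<close>.\<close>

lemma spectrum_nonneg:
  assumes \<phi>: "\<phi> \<in> spectrum_A B" and k: "k \<in> B" and k_nonneg: "\<And>x. 0 \<le> k x"
  shows "\<phi> (of_real_fun k) \<in> \<real> \<and> 0 \<le> Re (\<phi> (of_real_fun k))"
proof (rule ccontr)
  define z where "z = \<phi> (of_real_fun k)"
  define V where "V t = \<phi> (of_real_fun (\<lambda>x. min (k x) t))" for t
  assume "\<not> ?thesis"
  then have off_ray: "z \<noteq> of_real s" if "s \<ge> 0" for s
    using that by (auto simp: z_def)
  have min_mem: "of_real_fun (\<lambda>x. min (k x) t) \<in> algA B" if "t > 0" for t
    by (intro of_real_fun_mem_algA min_const_mem k that)
  have dichotomy: "V t = of_real t \<or> V t = z" if "t > 0" for t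
    using spectrum_truncation[OF \<phi> k that] by (auto simp: V_def z_def)
  have small: "cmod (V t) \<le> t" if "t > 0" for t
    unfolding V_def using k_nonneg that by (intro norm_spectrum_le[OF \<phi> min_mem[OF that]]) auto
  have lipschitz: "cmod (V t - V s) \<le> \<bar>t - s\<bar>" if "s > 0" "t > 0" for s t
  proof -
    let ?w = "\<lambda>x. min (k x) t - min (k x) s"
    have w: "of_real_fun ?w \<in> algA B"
      by (intro of_real_fun_mem_algA diff_mem min_const_mem k that)
    have "of_real_fun (\<lambda>x. min (k x) t) = (\<lambda>x. of_real_fun (\<lambda>x. min (k x) s) x + of_real_fun ?w x)"
      by simp
    then have "V t - V s = \<phi> (of_real_fun ?w)"
      unfolding V_def using spectrum_A_add[OF \<phi> min_mem[OF \<open>s > 0\<close>] w] by simp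
    also have "cmod \<dots> \<le> \<bar>t - s\<bar>"
      by (rule norm_spectrum_le[OF \<phi> w]) (unfold norm_of_real, auto simp: min_def abs_if)
    finally show ?thesis .
  qed
  obtain M where M: "\<And>x. \<bar>k x\<bar> \<le> M" using bounded[OF k] by blast
  define T where "T = max M 1"
  have "T > 0" by (simp add: T_def)
  have "min (k x) T = k x" for x using M[of x] by (simp add: T_def)
  then have "V T = z" by (simp add: V_def z_def)
  moreover have "V T = of_real T"
    using eq_of_real_if_dichotomy_lipschitz[OF dichotomy small lipschitz off_ray \<open>T > 0\<close>] .
  ultimately show False using off_ray[of T] \<open>T > 0\<close> by simp
qed

section \<open>Null sets of \<open>\<mu>\<close> and \<open>\<mu>\<close>-hat\<close>

text \<open>Banach--Alaoglu: the characters with \<open>t \<le> \<bar>\<phi> v\<bar>\<close> form a closed subset of the compact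
  product of the balls of radius \<open>sup_norm a\<close>; the bound \<open>t > 0\<close> keeps \<open>0\<close> out of it.\<close>

lemma compactin_spectrum_level_set:
  assumes v: "v \<in> algA B" and "t > 0"
  shows "compactin (gelfand_top B) {\<phi> \<in> spectrum_A B. t \<le> cmod (\<phi> v)}"
proof -
  let ?A = "algA B" and ?P = "product_topology (\<lambda>_. euclidean) (algA B) :: (('x \<Rightarrow> complex) \<Rightarrow> complex) topology"
  define K where "K =
      {\<psi> \<in> topspace ?P. \<forall>i\<in>?A \<times> ?A. \<psi> (\<lambda>x. fst i x + snd i x) - (\<psi> (fst i) + \<psi> (snd i)) \<in> {0}}
    \<inter> {\<psi> \<in> topspace ?P. \<forall>i\<in>?A \<times> UNIV. \<psi> (\<lambda>x. snd i * fst i x) - snd i * \<psi> (fst i) \<in> {0}}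
    \<inter> {\<psi> \<in> topspace ?P. \<forall>i\<in>?A \<times> ?A. \<psi> (\<lambda>x. fst i x * snd i x) - \<psi> (fst i) * \<psi> (snd i) \<in> {0}}
    \<inter> {\<psi> \<in> topspace ?P. \<forall>a\<in>?A. cmod (\<psi> a) \<in> {..sup_norm a}}
    \<inter> {\<psi> \<in> topspace ?P. \<forall>a\<in>{v}. cmod (\<psi> a) \<in> {t..}}"
  have "closedin ?P K"
    unfolding K_def
    by (intro closedin_Int closedin_continuous_map_preimages continuous_map_diff continuous_map_add continuous_map_mult
        continuous_map_norm continuous_map_evaluation continuous_map_canonical_const) auto
  moreover have "K \<subseteq> PiE ?A (\<lambda>a. cball 0 (sup_norm a))"
    unfolding K_def by (auto simp: PiE_iff extensional_def)
  moreover have "compactin ?P (PiE ?A (\<lambda>a. cball 0 (sup_norm a)))"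
    by (simp add: compactin_PiE)
  ultimately have "compactin ?P K" by (metis closed_compactin)
  moreover have "K = {\<phi> \<in> spectrum_A B. t \<le> cmod (\<phi> v)}"
  proof (intro equalityI subsetI)
    fix \<psi> assume "\<psi> \<in> K"
    then have "\<psi> \<in> PiE ?A (\<lambda>_. UNIV)" by (simp add: K_def)
    then have undef: "\<forall>a. a \<notin> ?A \<longrightarrow> \<psi> a = undefined" by (blast intro: PiE_arb)
    from \<open>\<psi> \<in> K\<close> have "t \<le> cmod (\<psi> v)"
      and "\<forall>a\<in>?A. \<forall>b\<in>?A. \<psi> (\<lambda>x. a x + b x) = \<psi> a + \<psi> b"
      and "\<forall>a\<in>?A. \<forall>c. \<psi> (\<lambda>x. c * a x) = c * \<psi> a"
      and "\<forall>a\<in>?A. \<forall>b\<in>?A. \<psi> (\<lambda>x. a x * b x) = \<psi> a * \<psi> b"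
      and "\<forall>a\<in>?A. cmod (\<psi> a) \<le> 1 * (SUP x. cmod (a x))"
      by (auto simp: K_def sup_norm_def)
    moreover have "\<psi> v \<noteq> 0" using \<open>t \<le> cmod (\<psi> v)\<close> \<open>t > 0\<close> by auto
    ultimately show "\<psi> \<in> {\<phi> \<in> spectrum_A B. t \<le> cmod (\<phi> v)}"
      unfolding spectrum_A_def using v undef by blast
  next
    fix \<phi> assume \<phi>: "\<phi> \<in> {\<phi> \<in> spectrum_A B. t \<le> cmod (\<phi> v)}"
    then have "\<phi> \<in> topspace ?P" using topspace_gelfand_top by (auto simp: gelfand_top_def)
    then show "\<phi> \<in> K"
      using \<phi> spectrum_A_add spectrum_A_scale spectrum_A_mult norm_spectrum_le norm_le_sup_norm
      by (auto simp: K_def)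
  qed
  ultimately show ?thesis
    unfolding gelfand_top_def compactin_subtopology by auto
qed

lemma compactin_closure_support_excess:
  assumes k: "k \<in> B" and "t > 0"
  shows "compactin (gelfand_top B)
    (gelfand_top B closure_of {\<phi> \<in> spectrum_A B. gelfand_hat (of_real_fun (excess k t)) \<phi> \<noteq> 0})"
proof -
  let ?L = "{\<phi> \<in> spectrum_A B. t \<le> cmod (\<phi> (of_real_fun (\<lambda>x. min (k x) t)))}"
  have L: "compactin (gelfand_top B) ?L"
    by (intro compactin_spectrum_level_set of_real_fun_mem_algA min_const_mem k \<open>t > 0\<close>)
  have "{\<phi> \<in> spectrum_A B. gelfand_hat (of_real_fun (excess k t)) \<phi> \<noteq> 0} \<subseteq> ?L"
  proof safe
    fix \<phi> assume \<phi>: "\<phi> \<in> spectrum_A B" and "gelfand_hat (of_real_fun (excess k t)) \<phi> \<noteq> 0"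
    then have "\<phi> (of_real_fun (\<lambda>x. min (k x) t)) = of_real t"
      using spectrum_truncation(2)[OF \<phi> k \<open>t > 0\<close>] by (simp add: gelfand_hat_def)
    then show "t \<le> cmod (\<phi> (of_real_fun (\<lambda>x. min (k x) t)))" using \<open>t > 0\<close> by simp
  qed
  then have "gelfand_top B closure_of {\<phi> \<in> spectrum_A B. gelfand_hat (of_real_fun (excess k t)) \<phi> \<noteq> 0} \<subseteq> ?L"
    by (intro closure_of_minimal compactin_imp_closedin[OF Hausdorff_space_gelfand_top L])
  then show ?thesis by (rule closed_compactin[OF L]) simp
qed

lemma spectrum_eq_0_iff_excess_eq_0:
  assumes \<phi>: "\<phi> \<in> spectrum_A B" and k: "k \<in> B" and k_nonneg: "\<And>x. 0 \<le> k x"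
  shows "\<phi> (of_real_fun k) = 0 \<longleftrightarrow> (\<forall>n. \<phi> (of_real_fun (excess k (1 / real (Suc n)))) = 0)"
proof
  assume "\<phi> (of_real_fun k) = 0"
  show "\<forall>n. \<phi> (of_real_fun (excess k (1 / real (Suc n)))) = 0"
  proof
    fix n
    define t where "t = 1 / real (Suc n)"
    have "t > 0" by (simp add: t_def)
    let ?v = "\<phi> (of_real_fun (\<lambda>x. min (k x) t))" and ?r = "\<phi> (of_real_fun (excess k t))"
    have "0 \<le> Re ?r"
      using spectrum_nonneg[OF \<phi> excess_mem[OF k \<open>t > 0\<close>]] by (simp add: excess_def)
    have "?v = - ?r"
      using spectrum_truncation(1)[OF \<phi> k \<open>t > 0\<close>] \<open>\<phi> (of_real_fun k) = 0\<close>
      by (simp add: eq_neg_iff_add_eq_0)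
    then have "(- ?r - of_real t) * ?r = 0"
      using spectrum_truncation(2)[OF \<phi> k \<open>t > 0\<close>] by simp
    then have "?r = 0 \<or> - ?r = of_real t" by auto
    moreover have "- ?r \<noteq> of_real t"
    proof
      assume "- ?r = of_real t"
      then have "- Re ?r = t" by (metis Re_complex_of_real uminus_complex.sel(1))
      with \<open>0 \<le> Re ?r\<close> \<open>t > 0\<close> show False by linarith
    qed
    ultimately show "?r = 0" by blast
  qed
next
  assume excess_0: "\<forall>n. \<phi> (of_real_fun (excess k (1 / real (Suc n)))) = 0"
  have "cmod (\<phi> (of_real_fun k)) \<le> 1 / real (Suc n)" for n
  proof -
    let ?t = "1 / real (Suc n)"
    have "?t > 0" by simp
    have "\<phi> (of_real_fun k) = \<phi> (of_real_fun (\<lambda>x. min (k x) ?t))"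
      using spectrum_truncation(1)[OF \<phi> k \<open>?t > 0\<close>] excess_0 by simp
    also have "cmod \<dots> \<le> ?t"
      using k_nonneg by (intro norm_spectrum_le[OF \<phi>] of_real_fun_mem_algA min_const_mem k) auto
    finally show ?thesis .
  qed
  then have "cmod (\<phi> (of_real_fun k)) = 0" by (rule eq_0_if_le_inverse_Suc[OF norm_ge_zero])
  then show "\<phi> (of_real_fun k) = 0" by simp
qed

lemma AE_eq_0_iff_AE_gelfand_hat_eq_0_of_compact_support:
  assumes \<mu>: "\<mu> \<in> D_B B" and rep: "represents_hat B \<mu> \<nu>"
    and g: "g \<in> B" and g_nonneg: "\<And>x. 0 \<le> g x"
    and support: "compactin (gelfand_top B)
      (gelfand_top B closure_of {\<phi> \<in> spectrum_A B. gelfand_hat (of_real_fun g) \<phi> \<noteq> 0})"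
  shows "(AE x in \<mu>. g x = 0) \<longleftrightarrow> (AE \<phi> in \<nu>. gelfand_hat (of_real_fun g) \<phi> = 0)"
proof -
  let ?h = "\<lambda>\<phi>. ennreal (Re (gelfand_hat (of_real_fun g) \<phi>))"
  have radon: "radon_measure (gelfand_top B) \<nu>" using rep unfolding represents_hat_def by blast
  have space: "space \<nu> = spectrum_A B" by (rule space_eq_spectrum_A_if_represents_hat[OF rep])
  have nonneg: "gelfand_hat (of_real_fun g) \<phi> \<in> \<real> \<and> 0 \<le> Re (gelfand_hat (of_real_fun g) \<phi>)"
    if "\<phi> \<in> spectrum_A B" for \<phi>
    unfolding gelfand_hat_def by (rule spectrum_nonneg[OF that g g_nonneg])
  have "(\<integral>\<^sup>+ \<phi>. ?h \<phi> \<partial>\<nu>) = I_ext B \<mu> g"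
    using rep of_real_fun_mem_algA[OF g] nonneg support unfolding represents_hat_def by auto
  also have "\<dots> = (\<integral>\<^sup>+ x. ennreal (g x) \<partial>\<mu>)" by (rule I_ext_eq_nn_integral[OF \<mu> g g_nonneg])
  finally have integrals: "(\<integral>\<^sup>+ \<phi>. ?h \<phi> \<partial>\<nu>) = (\<integral>\<^sup>+ x. ennreal (g x) \<partial>\<mu>)" .
  have "?h \<in> borel_measurable \<nu>"
    using borel_measurable_continuous_map_radon[OF radon continuous_map_gelfand_hat]
    by (intro measurable_compose[OF _ measurable_ennreal] measurable_compose[OF _ borel_measurable_Re])
  have "(\<lambda>x. ennreal (g x)) \<in> borel_measurable \<mu>"
    using \<mu> g unfolding D_B_def by (auto intro: borel_measurable_integrable)
  have "(AE x in \<mu>. g x = 0) \<longleftrightarrow> (AE x in \<mu>. ennreal (g x) = 0)"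
  proof (rule AE_cong)
    fix x
    show "g x = 0 \<longleftrightarrow> ennreal (g x) = 0"
      unfolding ennreal_eq_0_iff using g_nonneg[of x] by auto
  qed
  also have "\<dots> \<longleftrightarrow> (\<integral>\<^sup>+ x. ennreal (g x) \<partial>\<mu>) = 0"
    by (rule nn_integral_0_iff_AE[symmetric]) fact
  also have "\<dots> \<longleftrightarrow> (AE \<phi> in \<nu>. ?h \<phi> = 0)"
    unfolding integrals[symmetric] by (rule nn_integral_0_iff_AE) fact
  also have "\<dots> \<longleftrightarrow> (AE \<phi> in \<nu>. gelfand_hat (of_real_fun g) \<phi> = 0)"
  proof (rule AE_cong)
    fix \<phi> assume "\<phi> \<in> space \<nu>"
    then have "\<phi> \<in> spectrum_A B" using space by simp
    from nonneg[OF this] show "?h \<phi> = 0 \<longleftrightarrow> gelfand_hat (of_real_fun g) \<phi> = 0"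
      by (intro ennreal_Re_eq_0_iff) blast+
  qed
  finally show ?thesis .
qed

lemma AE_eq_0_iff_AE_gelfand_hat_eq_0_of_nonneg:
  assumes \<mu>: "\<mu> \<in> D_B B" and rep: "represents_hat B \<mu> \<nu>"
    and k: "k \<in> B" and k_nonneg: "\<And>x. 0 \<le> k x"
  shows "(AE x in \<mu>. k x = 0) \<longleftrightarrow> (AE \<phi> in \<nu>. gelfand_hat (of_real_fun k) \<phi> = 0)"
proof -
  let ?r = "\<lambda>n. excess k (1 / real (Suc n))"
  have space: "space \<nu> = spectrum_A B" by (rule space_eq_spectrum_A_if_represents_hat[OF rep])
  have r: "?r n \<in> B" for n by (intro excess_mem k) simp
  have r_nonneg: "0 \<le> ?r n x" for n x by (simp add: excess_def)
  have "k x = 0 \<longleftrightarrow> (\<forall>n. ?r n x = 0)" for x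
    using k_nonneg[of x] eq_0_if_le_inverse_Suc[of "k x"] by (auto simp: excess_def min_def)
  then have "(AE x in \<mu>. k x = 0) \<longleftrightarrow> (\<forall>n. AE x in \<mu>. ?r n x = 0)"
    by (simp add: AE_all_countable)
  also have "\<dots> \<longleftrightarrow> (\<forall>n. AE \<phi> in \<nu>. gelfand_hat (of_real_fun (?r n)) \<phi> = 0)"
    using AE_eq_0_iff_AE_gelfand_hat_eq_0_of_compact_support[OF \<mu> rep r r_nonneg
        compactin_closure_support_excess[OF k]] by simp
  also have "\<dots> \<longleftrightarrow> (AE \<phi> in \<nu>. \<forall>n. gelfand_hat (of_real_fun (?r n)) \<phi> = 0)"
    by (simp add: AE_all_countable)
  also have "\<dots> \<longleftrightarrow> (AE \<phi> in \<nu>. gelfand_hat (of_real_fun k) \<phi> = 0)"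
  proof (rule AE_cong)
    fix \<phi> assume "\<phi> \<in> space \<nu>"
    then have "\<phi> \<in> spectrum_A B" using space by simp
    from spectrum_eq_0_iff_excess_eq_0[OF this k k_nonneg]
    show "(\<forall>n. gelfand_hat (of_real_fun (?r n)) \<phi> = 0) \<longleftrightarrow> gelfand_hat (of_real_fun k) \<phi> = 0"
      unfolding gelfand_hat_def by (rule sym)
  qed
  finally show ?thesis .
qed

lemma gelfand_hat_square_eq_0_iff:
  assumes "\<phi> \<in> spectrum_A B" and "f \<in> B"
  shows "gelfand_hat (of_real_fun (\<lambda>x. f x * f x)) \<phi> = 0 \<longleftrightarrow> gelfand_hat (of_real_fun f) \<phi> = 0"
proof -
  have f: "of_real_fun f \<in> algA B" by (rule of_real_fun_mem_algA[OF assms(2)])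
  have "gelfand_hat (of_real_fun (\<lambda>x. f x * f x)) \<phi> = gelfand_hat (of_real_fun f) \<phi> ^ 2"
    unfolding gelfand_hat_def of_real_mult power2_eq_square by (rule spectrum_A_mult[OF assms(1) f f])
  then show ?thesis by simp
qed

end

theorem mainTheorem8:
  fixes B :: "('x \<Rightarrow> real) set" and \<mu> :: "'x measure"
    and \<nu> :: "(('x \<Rightarrow> complex) \<Rightarrow> complex) measure" and f :: "'x \<Rightarrow> real"
  assumes "admissible_B B" and "vanishes_nowhere B"
    and "\<mu> \<in> D_B B" and "represents_hat B \<mu> \<nu>"
    and "f \<in> B"
  shows "(AE x in \<mu>. f x = 0) \<longleftrightarrow>
         (AE \<phi> in \<nu>. gelfand_hat (\<lambda>x. complex_of_real (f x)) \<phi> = 0)"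
proof -
  interpret admissible_algebra B by unfold_locales fact
  have "(AE x in \<mu>. f x = 0) \<longleftrightarrow> (AE x in \<mu>. f x * f x = 0)" by simp
  also have "\<dots> \<longleftrightarrow> (AE \<phi> in \<nu>. gelfand_hat (of_real_fun (\<lambda>x. f x * f x)) \<phi> = 0)"
    using assms(3,4) by (intro AE_eq_0_iff_AE_gelfand_hat_eq_0_of_nonneg mult_mem assms(5)) auto
  also have "\<dots> \<longleftrightarrow> (AE \<phi> in \<nu>. gelfand_hat (of_real_fun f) \<phi> = 0)"
    using space_eq_spectrum_A_if_represents_hat[OF assms(4)] gelfand_hat_square_eq_0_iff assms(5)
    by (intro AE_cong) simp
  finally show ?thesis .
qed

end
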